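(* Let $\mathcal C\subset\mathbb R^d$ be a convex compact set, $H=\operatorname{aff}(\mathcal C)$ with direction $V$, and $\Omega$ a proper l.s.c. convex function on $\mathbb R^d$ with $\operatorname{dom}(\Omega)=\mathcal C$ whose restriction to $H$ is Legendre-type (with respect to the metric of $H$). Then there exists a Legendre-type function $\Psi:\mathbb R^d\to\mathbb R\cup\{+\infty\}$ with $\mathcal C\subset\operatorname{cl}(\operatorname{int}(\operatorname{dom}\Psi))$ and $\operatorname{int}(\operatorname{dom}\Psi)\cap\mathcal C\neq\emptyset$, such that $\Omega=\Psi+\mathbb I_{\mathcal C}$ and $\operatorname{dom}(\Psi^* )=\mathbb R^d$, and such that for every $\theta\in\mathbb R^d$ there exists $z\in V^\perp$ with $\nabla\Psi(\nabla\Omega^*(\theta))=\theta+z$.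
   Context: A function is Legendre-type if it is strictly convex on the interior of its domain and essentially smooth (nonempty interior of domain, differentiable there, gradient norm tending to $+\infty$ at the boundary of the domain); for a restriction to $H$ this is understood with respect to the metric of $H$. $\mathbb I_{\mathcal C}$ is the indicator function of $\mathcal C$ and ${}^*$ denotes Fenchel conjugation. *)

theory Defs
  imports "HOL-Analysis.Analysis"
begin

definition edom :: "('a \<Rightarrow> ereal) \<Rightarrow> 'a set" where
  "edom f = {x. f x < \<infinity>}"

definition proper_fun :: "('a \<Rightarrow> ereal) \<Rightarrow> bool" where
  "proper_fun f \<longleftrightarrow> (\<forall>x. f x \<noteq> -\<infinity>) \<and> edom f \<noteq> {}"

definition econvex :: "('a::real_vector \<Rightarrow> ereal) \<Rightarrow> bool" where
  "econvex f \<longleftrightarrow> convex {(x, t::real). f x \<le> ereal t}"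

definition elsc :: "('a::topological_space \<Rightarrow> ereal) \<Rightarrow> bool" where
  "elsc f \<longleftrightarrow> (\<forall>x. f x \<le> Liminf (at x) f)"

definition fenchel_conj :: "('a::real_inner \<Rightarrow> ereal) \<Rightarrow> 'a \<Rightarrow> ereal" where
  "fenchel_conj f \<theta> = (SUP x. ereal (\<theta> \<bullet> x) - f x)"

definition eindicator :: "'a set \<Rightarrow> 'a \<Rightarrow> ereal" where
  "eindicator C x = (if x \<in> C then 0 else \<infinity>)"

definition dir :: "'a::real_vector set \<Rightarrow> 'a set" where
  "dir H = {y - z | y z. y \<in> H \<and> z \<in> H}"

definition int_in :: "'a::topological_space set \<Rightarrow> 'a set \<Rightarrow> 'a set" where
  "int_in H S = {x. \<exists>T. openin (top_of_set H) T \<and> x \<in> T \<and> T \<subseteq> S}"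

definition has_grad_in :: "'a::euclidean_space set \<Rightarrow> ('a \<Rightarrow> ereal) \<Rightarrow> 'a \<Rightarrow> 'a \<Rightarrow> bool" where
  "has_grad_in H f g x \<longleftrightarrow> g \<in> dir H \<and> f x \<noteq> \<infinity> \<and> f x \<noteq> -\<infinity> \<and>
     ((\<lambda>y. real_of_ereal (f y)) has_derivative (\<lambda>h. g \<bullet> h)) (at x within H)"

definition grad_in :: "'a::euclidean_space set \<Rightarrow> ('a \<Rightarrow> ereal) \<Rightarrow> 'a \<Rightarrow> 'a" where
  "grad_in H f x = (SOME g. has_grad_in H f g x)"

text \<open>Legendre type of the restriction of f to the affine set H, w.r.t. the metric of H.
  The domain of the restriction is edom f \<inter> H; its interior is taken relative to H.\<close>
definition legendre_in :: "'a::euclidean_space set \<Rightarrow> ('a \<Rightarrow> ereal) \<Rightarrow> bool" where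
  "legendre_in H f \<longleftrightarrow>
     (let D = edom f \<inter> H; I = int_in H D in
       I \<noteq> {} \<and>
       (\<forall>x\<in>I. \<exists>g. has_grad_in H f g x) \<and>
       (\<forall>x\<in>I. \<forall>y\<in>I. x \<noteq> y \<longrightarrow> (\<forall>u::real. 0 < u \<and> u < 1 \<longrightarrow>
          f (u *\<^sub>R x + (1 - u) *\<^sub>R y) < ereal u * f x + ereal (1 - u) * f y)) \<and>
       (\<forall>s x. (\<forall>k. s k \<in> I) \<longrightarrow> s \<longlonglongrightarrow> x \<longrightarrow> x \<in> closure D - I \<longrightarrow>
          filterlim (\<lambda>k. norm (grad_in H f (s k))) at_top sequentially))"

abbreviation legendre :: "('a::euclidean_space \<Rightarrow> ereal) \<Rightarrow> bool" where
  "legendre f \<equiv> legendre_in UNIV f"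

end

theory Submission
  imports Defs
begin

(*
  For fixed \<theta>, the function x \<mapsto> \<theta> \<bullet> x - \<Omega> x is upper semicontinuous on the compact set C,
  so it attains its maximum. A maximiser p lies in the relative interior of C: otherwise, on the
  segment from p to a relative interior point, the gradient inequality and the optimality of p bound
  the gradients of \<Omega> uniformly, contradicting the blow-up demanded by essential smoothness.
  Strict convexity makes p unique, a compactness argument shows that p depends continuously on
  \<theta>, and then \<Omega>\<^sup>* is differentiable at \<theta> with gradient p, because the remainder is squeezed
  between 0 and |\<theta>' - \<theta>| |p' - p|. Optimality of p along H says that \<nabla>\<^sub>H \<Omega>(p) - \<theta> is orthogonal
  to the direction V of H.

  The extension is \<Psi> x = \<Omega> (P x) + |x - P x|\<^sup>2 / 2, where P is the orthogonal projection onto H.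
  It agrees with \<Omega> on C, the interior of its domain is P\<^sup>-\<^sup>1(ri C), and there its gradient is
  \<nabla>\<^sub>H \<Omega>(P x) + (x - P x), whose norm dominates |\<nabla>\<^sub>H \<Omega>(P x)| by Pythagoras; so \<Psi> is of
  Legendre type, \<nabla>\<Psi>(p) = \<nabla>\<^sub>H \<Omega>(p), and \<Psi>\<^sup>* \<le> \<Omega>\<^sup>* + |\<cdot>|\<^sup>2 / 2 is finite.
*)

lemma elsc_imp_gt_on_ball:
  fixes f :: "'a::metric_space \<Rightarrow> ereal"
  assumes "elsc f" "c < f x"
  shows "\<exists>e>0. \<forall>y\<in>ball x e. c < f y"
proof -
  have "c < Liminf (at x) f" using assms unfolding elsc_def by (meson order_less_le_trans)
  then obtain e where "e > 0" "c < (INF y\<in>ball x e - {x}. f y)"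
    unfolding Liminf_at by (auto simp: less_SUP_iff)
  then show ?thesis
    using assms(2) by (metis DiffI less_INF_D singletonD)
qed

lemma compact_attains_min_lsc:
  fixes f :: "'a::metric_space \<Rightarrow> real"
  assumes "compact K" "K \<noteq> {}"
    and lsc: "\<And>x c. x \<in> K \<Longrightarrow> c < f x \<Longrightarrow> \<exists>e>0. \<forall>y\<in>K \<inter> ball x e. c < f y"
  shows "\<exists>x\<in>K. \<forall>y\<in>K. f x \<le> f y"
proof (rule ccontr)
  assume "\<not> ?thesis"
  then obtain next_pt where next_pt: "\<And>x. x \<in> K \<Longrightarrow> next_pt x \<in> K \<and> f (next_pt x) < f x"
    by (metis not_le)
  have "\<forall>x\<in>K. \<exists>e>0. \<forall>y\<in>K \<inter> ball x e. f (next_pt x) < f y"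
    using lsc next_pt by blast
  then obtain e where e: "\<And>x. x \<in> K \<Longrightarrow> e x > 0 \<and> (\<forall>y\<in>K \<inter> ball x (e x). f (next_pt x) < f y)"
    by metis
  then have "K \<subseteq> (\<Union>x\<in>K. ball x (e x))" by force
  then obtain F where F: "F \<subseteq> K" "finite F" "K \<subseteq> (\<Union>x\<in>F. ball x (e x))"
    using compactE_image[OF assms(1), of K "\<lambda>x. ball x (e x)"] by blast
  then have "F \<noteq> {}" using assms(2) by auto
  define m where "m = Min ((\<lambda>x. f (next_pt x)) ` F)"
  have "m \<in> (\<lambda>x. f (next_pt x)) ` F" unfolding m_def using F(2) \<open>F \<noteq> {}\<close> by (intro Min_in) auto
  then obtain x0 where "x0 \<in> F" "m = f (next_pt x0)" by auto
  moreover obtain x1 where "x1 \<in> F" "next_pt x0 \<in> ball x1 (e x1)"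
    using F next_pt \<open>x0 \<in> F\<close> by blast
  ultimately have "f (next_pt x1) < m"
    using e[of x1] next_pt[of x0] F(1) by (metis IntI subsetD)
  moreover have "m \<le> f (next_pt x1)" unfolding m_def using F(2) \<open>x1 \<in> F\<close> by simp
  ultimately show False by simp
qed

lemma convex_on_directional_derivative_le:
  fixes f :: "'a::real_vector \<Rightarrow> real"
  assumes "convex_on S f" "x \<in> S" "w \<in> S"
    and "((\<lambda>t. f (x + t *\<^sub>R (w - x))) has_real_derivative d) (at 0)"
  shows "f x + d \<le> f w"
proof -
  let ?h = "\<lambda>t. f (x + t *\<^sub>R (w - x))"
  have "((\<lambda>t. (?h t - ?h 0) / t) \<longlongrightarrow> d) (at_right 0)"
    using assms(4) unfolding has_field_derivative_iff by (auto intro: tendsto_within_subset)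
  moreover have "\<forall>\<^sub>F t in at_right 0. (?h t - ?h 0) / t \<le> f w - f x"
    unfolding eventually_at_right_field
  proof (intro exI[of _ 1] conjI allI impI)
    fix t :: real assume t: "0 < t" "t < 1"
    have "?h t = f ((1 - t) *\<^sub>R x + t *\<^sub>R w)" by (simp add: algebra_simps)
    also have "\<dots> \<le> (1 - t) * f x + t * f w" using convex_onD[OF assms(1)] assms(2,3) t by simp
    finally show "(?h t - ?h 0) / t \<le> f w - f x" using t by (simp add: field_simps)
  qed simp
  ultimately have "d \<le> f w - f x" by (rule tendsto_upperbound) simp
  then show ?thesis by simp
qed

lemma norm_convex_combination_square:
  fixes a b :: "'a::real_inner"
  shows "(norm (u *\<^sub>R a + (1 - u) *\<^sub>R b))\<^sup>2
    = u * (norm a)\<^sup>2 + (1 - u) * (norm b)\<^sup>2 - u * (1 - u) * (norm (a - b))\<^sup>2"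
  unfolding power2_norm_eq_inner
  by (simp add: inner_commute algebra_simps)

lemma has_derivative_inner_squeeze:
  fixes f :: "'a::real_inner \<Rightarrow> real"
  assumes "\<And>y. 0 \<le> f y - f x - a \<bullet> (y - x)"
    and "\<And>y. f y - f x - a \<bullet> (y - x) \<le> norm (y - x) * e y"
    and "(e \<longlongrightarrow> 0) (at x)"
  shows "(f has_derivative (\<lambda>h. a \<bullet> h)) (at x)"
  unfolding has_derivative_within
proof (intro conjI bounded_linear_inner_right Lim_null_comparison[OF _ assms(3)])
  have "norm ((1 / norm (y - x)) *\<^sub>R (f y - (f x + a \<bullet> (y - x)))) \<le> e y" if "y \<noteq> x" for y
  proof -
    have "\<bar>f y - (f x + a \<bullet> (y - x))\<bar> \<le> norm (y - x) * e y" using assms(1,2)[of y] by simp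
    then show ?thesis using that by (simp add: divide_le_eq mult.commute)
  qed
  then show "\<forall>\<^sub>F y in at x. norm ((1 / norm (y - x)) *\<^sub>R (f y - (f x + a \<bullet> (y - x)))) \<le> e y"
    by (simp add: eventually_at_filter)
qed

section \<open>Directions of affine sets and gradients relative to them\<close>

lemma int_in_UNIV: "int_in UNIV S = interior S"
  unfolding int_in_def interior_def by auto

lemma dir_UNIV [simp]: "dir UNIV = UNIV"
  unfolding dir_def by (simp add: set_eq_iff) (metis diff_zero)

lemma diff_in_dir: "x \<in> H \<Longrightarrow> y \<in> H \<Longrightarrow> x - y \<in> dir H"
  unfolding dir_def by blast

lemma affine_add_dir: "affine H \<Longrightarrow> x \<in> H \<Longrightarrow> v \<in> dir H \<Longrightarrow> x + t *\<^sub>R v \<in> H"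
  unfolding dir_def using mem_affine_3_minus by blast

lemma affine_mem_iff_dir: "affine H \<Longrightarrow> a \<in> H \<Longrightarrow> x \<in> H \<longleftrightarrow> x - a \<in> dir H"
  using affine_add_dir[of H a "x - a" 1] diff_in_dir[of x H a] by auto

lemma subspace_dir:
  assumes "affine H" "a \<in> H"
  shows "subspace (dir H)"
proof -
  have "dir H = (\<lambda>x. x - a) ` H"
  proof (intro set_eqI iffI)
    fix v assume "v \<in> dir H"
    then show "v \<in> (\<lambda>x. x - a) ` H"
      using affine_mem_iff_dir[OF assms, of "v + a"] by force
  qed (use affine_mem_iff_dir[OF assms] in auto)
  then show ?thesis using affine_diffs_subspace_subtract[OF assms] by simp
qed

lemma has_grad_in_line_derivative:
  assumes "affine H" "has_grad_in H f g x" "x \<in> H" "v \<in> dir H"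
  shows "((\<lambda>t. real_of_ereal (f (x + t *\<^sub>R v))) has_real_derivative g \<bullet> v) (at 0)"
proof -
  have line: "((\<lambda>t. x + t *\<^sub>R v) has_derivative (\<lambda>t. t *\<^sub>R v)) (at 0)"
    by (auto intro!: derivative_eq_intros)
  have "((\<lambda>y. real_of_ereal (f y)) has_derivative (\<bullet>) g) (at (x + 0 *\<^sub>R v) within range (\<lambda>t. x + t *\<^sub>R v))"
    using assms(2) affine_add_dir[OF assms(1,3,4)] unfolding has_grad_in_def
    by (auto intro: has_derivative_subset)
  from diff_chain_within[OF line this] show ?thesis
    by (simp add: has_field_derivative_def o_def mult_commute_abs)
qed

lemma has_grad_in_unique:
  assumes "affine H" "x \<in> H" "has_grad_in H f g x" "has_grad_in H f g' x"
  shows "g = g'"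
proof -
  have "g - g' \<in> dir H"
    using assms(3,4) subspace_diff[OF subspace_dir[OF assms(1,2)]] unfolding has_grad_in_def by blast
  from DERIV_unique[OF has_grad_in_line_derivative[OF assms(1,3,2) this]
      has_grad_in_line_derivative[OF assms(1,4,2) this]]
  have "(g - g') \<bullet> (g - g') = 0" by (simp add: inner_diff_left)
  then show ?thesis by simp
qed

lemma grad_in_eqI: "affine H \<Longrightarrow> x \<in> H \<Longrightarrow> has_grad_in H f g x \<Longrightarrow> grad_in H f x = g"
  unfolding grad_in_def by (rule some_equality) (auto intro: has_grad_in_unique)

section \<open>Orthogonal projection onto an affine set\<close>

lemma closest_point_subspace_orthogonal:
  fixes V :: "'a::euclidean_space set"
  assumes "subspace V" "v \<in> V"
  shows "(x - closest_point V x) \<bullet> v = 0"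
proof -
  let ?p = "closest_point V x"
  have cl: "convex V" "closed V" using assms(1) by (simp_all add: subspace_imp_convex closed_subspace)
  have "?p \<in> V" using closest_point_in_set[OF cl(2)] assms(1) subspace_0 by blast
  then have "?p + v \<in> V" "?p - v \<in> V" using assms by (simp_all add: subspace_add subspace_diff)
  from this[THEN closest_point_dot[OF cl, of _ x]] show ?thesis by simp
qed

lemma closest_point_subspace_eqI:
  fixes V :: "'a::euclidean_space set"
  assumes "subspace V" "y \<in> V" "\<And>v. v \<in> V \<Longrightarrow> (x - y) \<bullet> v = 0"
  shows "closest_point V x = y"
proof -
  let ?p = "closest_point V x"
  have "?p \<in> V" using closest_point_in_set[OF closed_subspace] assms(1) subspace_0 by blast
  then have d: "y - ?p \<in> V" using assms(1,2) subspace_diff by blast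
  have "(y - ?p) \<bullet> (y - ?p) = (x - ?p) \<bullet> (y - ?p) - (x - y) \<bullet> (y - ?p)"
    by (simp add: inner_diff_left)
  also have "\<dots> = 0" using closest_point_subspace_orthogonal[OF assms(1) d] assms(3)[OF d] by simp
  finally show ?thesis by simp
qed

lemma linear_closest_point_subspace:
  fixes V :: "'a::euclidean_space set"
  assumes "subspace V"
  shows "linear (closest_point V)"
proof
  have inV: "closest_point V x \<in> V" for x
    using closest_point_in_set[OF closed_subspace] assms subspace_0 by blast
  note orth = closest_point_subspace_orthogonal[OF assms]
  fix x y :: 'a and c :: real
  show "closest_point V (x + y) = closest_point V x + closest_point V y"
    using orth[of _ x] orth[of _ y]
    by (intro closest_point_subspace_eqI assms subspace_add inV)
       (simp add: algebra_simps)
  show "closest_point V (c *\<^sub>R x) = c *\<^sub>R closest_point V x"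
    using orth[of _ x]
    by (intro closest_point_subspace_eqI assms subspace_scale inV)
       (simp add: algebra_simps)
qed

lemma closest_point_affine:
  fixes H :: "'a::euclidean_space set"
  assumes "affine H" "a \<in> H"
  shows "closest_point H x = closest_point (dir H) x + (a - closest_point (dir H) a)"
proof -
  let ?P = "closest_point (dir H)"
  have V: "subspace (dir H)" using subspace_dir[OF assms] .
  have lin: "?P x + (a - ?P a) = a + ?P (x - a)"
    using linear_diff[OF linear_closest_point_subspace[OF V]] by simp
  have "a + ?P (x - a) \<in> H"
    using affine_mem_iff_dir[OF assms] closest_point_in_set[OF closed_subspace[OF V]] V subspace_0
    by fastforce
  moreover have "dist x (a + ?P (x - a)) \<le> dist x z" if "z \<in> H" for z
  proof -
    have "a + ?P (x - a) - z \<in> dir H" using diff_in_dir[OF \<open>a + ?P (x - a) \<in> H\<close> that] .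
    from closest_point_subspace_orthogonal[OF V this, of "x - a"]
    have "orthogonal (x - (a + ?P (x - a))) (a + ?P (x - a) - z)"
      unfolding orthogonal_def
      by (metis diff_diff_eq)
    from norm_add_Pythagorean[OF this] show ?thesis
      by (simp add: dist_norm power2_le_imp_le)
  qed
  ultimately show ?thesis
    unfolding lin using closest_point_unique[OF affine_imp_convex[OF assms(1)] affine_closed[OF assms(1)]]
    by (metis (no_types, lifting))
qed

lemma has_derivative_closest_point_affine:
  fixes H :: "'a::euclidean_space set"
  assumes "affine H" "H \<noteq> {}"
  shows "(closest_point H has_derivative closest_point (dir H)) (at x)"
proof -
  obtain a where "a \<in> H" using assms(2) by blast
  have "linear (closest_point (dir H))"
    using linear_closest_point_subspace subspace_dir[OF assms(1) \<open>a \<in> H\<close>] by blast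
  then show ?thesis
    unfolding closest_point_affine[OF assms(1) \<open>a \<in> H\<close>, abs_def]
    by (intro has_derivative_add_const linear_imp_has_derivative)
qed

lemma closest_point_affine_orthogonal:
  fixes H :: "'a::euclidean_space set"
  assumes "affine H" "v \<in> dir H"
  shows "(x - closest_point H x) \<bullet> v = 0"
proof -
  obtain a where "a \<in> H" using assms(2) unfolding dir_def by blast
  have "subspace (dir H)" using subspace_dir[OF assms(1) \<open>a \<in> H\<close>] .
  then show ?thesis
    using closest_point_subspace_orthogonal[of "dir H" v "x - a"] assms(2)
      linear_diff[OF linear_closest_point_subspace, of "dir H" x a]
    unfolding closest_point_affine[OF assms(1) \<open>a \<in> H\<close>] by (simp add: algebra_simps)
qed

lemma closest_point_affine_add:
  fixes H :: "'a::euclidean_space set"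
  assumes "affine H" "v \<in> dir H"
  shows "closest_point H (x + v) = closest_point H x + v"
proof -
  obtain a where "a \<in> H" using assms(2) unfolding dir_def by blast
  then show ?thesis
    using linear_add[OF linear_closest_point_subspace[OF subspace_dir[OF assms(1)]]]
      closest_point_self[OF assms(2)]
    unfolding closest_point_affine[OF assms(1) \<open>a \<in> H\<close>] by simp
qed

lemma closest_point_affine_combination:
  fixes H :: "'a::euclidean_space set"
  assumes "affine H" "H \<noteq> {}"
  shows "closest_point H (u *\<^sub>R x + (1 - u) *\<^sub>R y)
    = u *\<^sub>R closest_point H x + (1 - u) *\<^sub>R closest_point H y"
proof -
  obtain a where "a \<in> H" using assms(2) by blast
  have lin: "linear (closest_point (dir H))"
    using linear_closest_point_subspace subspace_dir[OF assms(1) \<open>a \<in> H\<close>] by blast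
  show ?thesis
    unfolding closest_point_affine[OF assms(1) \<open>a \<in> H\<close>]
    by (simp only: linear_add[OF lin] linear_scale[OF lin]) (simp add: algebra_simps)
qed

section \<open>Convex functions of Legendre type relative to the affine hull of a compact set\<close>

locale legendre_on_compact =
  fixes C :: "'a::euclidean_space set" and \<Omega> :: "'a \<Rightarrow> ereal"
  assumes convex_C: "convex C" and compact_C: "compact C" and proper: "proper_fun \<Omega>"
    and lsc: "elsc \<Omega>" and econvex: "econvex \<Omega>" and edom_eq: "edom \<Omega> = C"
    and legendre: "legendre_in (affine hull C) \<Omega>"
begin

abbreviation "H \<equiv> affine hull C"
abbreviation "V \<equiv> dir H"
abbreviation "RI \<equiv> rel_interior C"

definition \<omega> :: "'a \<Rightarrow> real" where "\<omega> x = real_of_ereal (\<Omega> x)"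

lemma C_nonempty: "C \<noteq> {}"
  using proper edom_eq unfolding proper_fun_def by auto

lemma \<Omega>_eq: "x \<in> C \<Longrightarrow> \<Omega> x = ereal (\<omega> x)"
  using proper edom_eq unfolding proper_fun_def edom_def \<omega>_def by (cases "\<Omega> x") auto

lemma \<Omega>_outside: "x \<notin> C \<Longrightarrow> \<Omega> x = \<infinity>"
  using edom_eq unfolding edom_def by auto

lemma C_subset_H: "x \<in> C \<Longrightarrow> x \<in> H"
  by (rule hull_inc)

lemma RI_subset_C: "x \<in> RI \<Longrightarrow> x \<in> C"
  using rel_interior_subset by blast

lemma subspace_V: "subspace V"
  using subspace_dir[of H] C_nonempty C_subset_H by auto

lemma legendre_in_rel_interior:
  "RI \<noteq> {} \<and> (\<forall>x\<in>RI. \<exists>g. has_grad_in H \<Omega> g x) \<and>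
   (\<forall>x\<in>RI. \<forall>y\<in>RI. x \<noteq> y \<longrightarrow> (\<forall>u::real. 0 < u \<and> u < 1 \<longrightarrow>
      \<Omega> (u *\<^sub>R x + (1 - u) *\<^sub>R y) < ereal u * \<Omega> x + ereal (1 - u) * \<Omega> y)) \<and>
   (\<forall>s x. (\<forall>k. s k \<in> RI) \<longrightarrow> s \<longlonglongrightarrow> x \<longrightarrow> x \<in> C - RI \<longrightarrow>
      filterlim (\<lambda>k. norm (grad_in H \<Omega> (s k))) at_top sequentially)"
proof -
  have "edom \<Omega> \<inter> H = C" unfolding edom_eq by (rule inf_absorb1[OF hull_subset])
  moreover have "int_in H C = RI" unfolding int_in_def rel_interior_def ..
  ultimately show ?thesis
    using legendre compact_C unfolding legendre_in_def Let_def by (simp add: compact_imp_closed)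
qed

lemma RI_nonempty: "RI \<noteq> {}"
  using legendre_in_rel_interior by blast

lemma has_grad_RI: "x \<in> RI \<Longrightarrow> has_grad_in H \<Omega> (grad_in H \<Omega> x) x"
  unfolding grad_in_def by (rule someI_ex) (use legendre_in_rel_interior in blast)

lemma grad_RI_in_V: "x \<in> RI \<Longrightarrow> grad_in H \<Omega> x \<in> V"
  using has_grad_RI unfolding has_grad_in_def by blast

lemma strict_convex_RI:
  assumes "x \<in> RI" "y \<in> RI" "x \<noteq> y" "0 < u" "u < 1"
  shows "\<omega> (u *\<^sub>R x + (1 - u) *\<^sub>R y) < u * \<omega> x + (1 - u) * \<omega> y"
proof -
  have "u *\<^sub>R x + (1 - u) *\<^sub>R y \<in> C"
    using convexD[OF convex_C, of x y u "1 - u"] assms RI_subset_C by auto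
  moreover have "\<Omega> (u *\<^sub>R x + (1 - u) *\<^sub>R y) < ereal u * \<Omega> x + ereal (1 - u) * \<Omega> y"
    using legendre_in_rel_interior assms by blast
  ultimately show ?thesis
    using assms by (simp add: \<Omega>_eq RI_subset_C)
qed

lemma grad_norm_tendsto_infinity:
  assumes "\<And>k. s k \<in> RI" "s \<longlonglongrightarrow> x" "x \<in> C" "x \<notin> RI"
  shows "filterlim (\<lambda>k. norm (grad_in H \<Omega> (s k))) at_top sequentially"
  using legendre_in_rel_interior assms by blast

lemma convex_on_\<omega>: "convex_on C \<omega>"
proof (rule convex_onI[OF _ convex_C])
  fix t :: real and x y assume "0 < t" "t < 1" "x \<in> C" "y \<in> C"
  moreover have "convex {(x, t::real). \<Omega> x \<le> ereal t}"
    using econvex unfolding econvex_def .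
  ultimately have "\<Omega> ((1 - t) *\<^sub>R x + t *\<^sub>R y) \<le> ereal ((1 - t) * \<omega> x + t * \<omega> y)"
    using convexD[of "{(x, t::real). \<Omega> x \<le> ereal t}" "(x, \<omega> x)" "(y, \<omega> y)" "1 - t" t]
    by (simp add: \<Omega>_eq)
  moreover have "(1 - t) *\<^sub>R x + t *\<^sub>R y \<in> C"
    using convexD_alt[OF convex_C] \<open>x \<in> C\<close> \<open>y \<in> C\<close> \<open>0 < t\<close> \<open>t < 1\<close> by simp
  ultimately show "\<omega> ((1 - t) *\<^sub>R x + t *\<^sub>R y) \<le> (1 - t) * \<omega> x + t * \<omega> y"
    by (simp add: \<Omega>_eq)
qed

lemma grad_inequality:
  assumes "x \<in> C" "has_grad_in H \<Omega> g x" "w \<in> C"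
  shows "\<omega> x + g \<bullet> (w - x) \<le> \<omega> w"
  using assms C_subset_H
  by (intro convex_on_directional_derivative_le[OF convex_on_\<omega>])
     (auto simp: \<omega>_def intro!: has_grad_in_line_derivative[of H] diff_in_dir)

section \<open>Maximisers of \<theta> \<bullet> x - \<Omega> x\<close>

definition \<phi> :: "'a \<Rightarrow> 'a \<Rightarrow> real" where "\<phi> \<theta> x = \<theta> \<bullet> x - \<omega> x"

lemma lsc_neg_\<phi>:
  assumes "x \<in> C" "c < - \<phi> \<theta> x"
  shows "\<exists>e>0. \<forall>y\<in>C \<inter> ball x e. c < - \<phi> \<theta> y"
proof -
  define d where "d = - \<phi> \<theta> x - c"
  have "d > 0" using assms(2) unfolding d_def by simp
  have "ereal (\<omega> x - d / 2) < \<Omega> x" using \<Omega>_eq[OF assms(1)] \<open>d > 0\<close> by simp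
  then obtain e1 where "e1 > 0" and e1: "\<forall>y\<in>ball x e1. ereal (\<omega> x - d / 2) < \<Omega> y"
    using elsc_imp_gt_on_ball[OF lsc] by blast
  define e where "e = min e1 (d / (2 * (norm \<theta> + 1)))"
  have "e > 0" unfolding e_def using \<open>e1 > 0\<close> \<open>d > 0\<close> by (simp add: add_nonneg_pos)
  have "c < - \<phi> \<theta> y" if y: "y \<in> C" "y \<in> ball x e" for y
  proof -
    have "y \<in> ball x e1" using y(2) unfolding e_def by simp
    then have "\<omega> x - d / 2 < \<omega> y" using e1 \<Omega>_eq[OF y(1)] by fastforce
    have "\<theta> \<bullet> (y - x) \<le> norm \<theta> * norm (y - x)" by (rule norm_cauchy_schwarz)
    also have "\<dots> \<le> (norm \<theta> + 1) * (d / (2 * (norm \<theta> + 1)))"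
      using y unfolding e_def by (intro mult_mono) (auto simp: dist_norm norm_minus_commute)
    also have "\<dots> = d / 2"
      using add_nonneg_pos[OF norm_ge_zero zero_less_one, of \<theta>] by (simp add: field_simps)
    finally show ?thesis
      using \<open>\<omega> x - d / 2 < \<omega> y\<close> unfolding d_def \<phi>_def inner_diff_right by argo
  qed
  with \<open>e > 0\<close> show ?thesis by blast
qed

lemma \<phi>_attains_max:
  assumes "compact K" "K \<noteq> {}" "K \<subseteq> C"
  shows "\<exists>p\<in>K. \<forall>x\<in>K. \<phi> \<theta> x \<le> \<phi> \<theta> p"
proof -
  have "\<exists>p\<in>K. \<forall>x\<in>K. - \<phi> \<theta> p \<le> - \<phi> \<theta> x"
    using assms lsc_neg_\<phi> by (intro compact_attains_min_lsc) blast+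
  then show ?thesis by auto
qed

lemma grad_bound_near_argmax_\<phi>:
  assumes p: "p \<in> C" "\<forall>x\<in>C. \<phi> \<theta> x \<le> \<phi> \<theta> p"
    and y: "y \<in> C" "r > 0" "ball y r \<inter> H \<subseteq> C" "\<forall>w\<in>ball y r \<inter> H. \<omega> w \<le> M"
    and t: "0 < t" "t \<le> 1"
    and G: "has_grad_in H \<Omega> G ((1 - t) *\<^sub>R p + t *\<^sub>R y)"
  shows "r / 2 * norm G \<le> M - \<omega> p - \<theta> \<bullet> (y - p)"
proof -
  define x where "x = (1 - t) *\<^sub>R p + t *\<^sub>R y"
  \<comment> \<open>test the gradient inequality at x in the direction of G, scaled so that y + u stays in the ball\<close>
  define u where "u = (r / 2 / norm G) *\<^sub>R G"
  have "x \<in> C" unfolding x_def using convexD_alt[OF convex_C p(1) y(1)] t by simp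
  have "u \<in> V" unfolding u_def using G subspace_scale[OF subspace_V] unfolding has_grad_in_def by blast
  have Gu: "G \<bullet> u = r / 2 * norm G"
    unfolding u_def by (cases "G = 0") (simp_all add: dot_square_norm power2_eq_square)
  have "norm u < r" unfolding u_def using \<open>r > 0\<close> by (cases "G = 0") simp_all
  moreover have "y + u \<in> H" using affine_add_dir[of H y u 1] \<open>u \<in> V\<close> y(1) C_subset_H by simp
  ultimately have "y + u \<in> ball y r \<inter> H" by (simp add: dist_norm)
  then have "y + u \<in> C" "\<omega> (y + u) \<le> M" using y by auto
  define w where "w = (1 - t) *\<^sub>R p + t *\<^sub>R (y + u)"
  have "w \<in> C" unfolding w_def using convexD_alt[OF convex_C p(1) \<open>y + u \<in> C\<close>] t by simp
  have "\<omega> x + t * (r / 2 * norm G) \<le> \<omega> w"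
    using grad_inequality[OF \<open>x \<in> C\<close> G[folded x_def] \<open>w \<in> C\<close>] Gu
    by (simp add: w_def x_def algebra_simps)
  also have "\<dots> \<le> (1 - t) * \<omega> p + t * M"
    using convex_onD[OF convex_on_\<omega>, of t p "y + u"] p(1) \<open>y + u \<in> C\<close> \<open>\<omega> (y + u) \<le> M\<close> t
    unfolding w_def by (smt (verit) mult_left_mono)
  finally have "\<omega> x + t * (r / 2 * norm G) \<le> (1 - t) * \<omega> p + t * M" .
  moreover have "\<omega> p + t * (\<theta> \<bullet> (y - p)) \<le> \<omega> x"
    using p(2) \<open>x \<in> C\<close> unfolding \<phi>_def x_def by (fastforce simp: algebra_simps)
  ultimately have "t * (r / 2 * norm G) \<le> t * (M - \<omega> p - \<theta> \<bullet> (y - p))"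
    by (simp add: algebra_simps)
  then show ?thesis using t by simp
qed

lemma RI_local_upper_bound:
  assumes "y \<in> RI"
  obtains r where "r > 0" "ball y r \<inter> H \<subseteq> C" "\<forall>w\<in>ball y r \<inter> H. \<omega> w \<le> \<omega> y + 1"
proof -
  obtain r1 where "r1 > 0" "ball y r1 \<inter> H \<subseteq> C"
    using assms unfolding rel_interior_ball by blast
  have "continuous (at y within H) \<omega>"
    using has_grad_RI[OF assms] unfolding has_grad_in_def \<omega>_def by (blast intro: has_derivative_continuous)
  then obtain r2 where "r2 > 0" and r2: "\<forall>w\<in>H. dist w y < r2 \<longrightarrow> dist (\<omega> w) (\<omega> y) < 1"
    unfolding continuous_within_eps_delta by (meson zero_less_one)
  show ?thesis
    using \<open>r1 > 0\<close> \<open>r2 > 0\<close> \<open>ball y r1 \<inter> H \<subseteq> C\<close> r2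
    by (intro that[of "min r1 r2"]) (auto simp: dist_commute dist_real_def)
qed

lemma argmax_\<phi>_in_RI:
  assumes "p \<in> C" "\<forall>x\<in>C. \<phi> \<theta> x \<le> \<phi> \<theta> p"
  shows "p \<in> RI"
proof (rule ccontr)
  assume "p \<notin> RI"
  obtain y where "y \<in> RI" using RI_nonempty by blast
  then obtain r where "r > 0" "ball y r \<inter> H \<subseteq> C" "\<forall>w\<in>ball y r \<inter> H. \<omega> w \<le> \<omega> y + 1"
    by (rule RI_local_upper_bound)
  note bound = grad_bound_near_argmax_\<phi>[OF assms RI_subset_C[OF \<open>y \<in> RI\<close>] this]
  define s where "s k = p - inverse (real (Suc k)) *\<^sub>R (p - y)" for k
  have s_eq: "s k = (1 - inverse (real (Suc k))) *\<^sub>R p + inverse (real (Suc k)) *\<^sub>R y" for k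
    unfolding s_def by (simp add: algebra_simps)
  have "s k \<in> RI" for k
    unfolding s_def using assms(1) closure_subset
    by (intro rel_interior_closure_convex_shrink[OF convex_C \<open>y \<in> RI\<close>]) (auto simp: field_simps)
  moreover have "s \<longlonglongrightarrow> p"
    unfolding s_def using tendsto_diff[OF tendsto_const tendsto_scaleR[OF LIMSEQ_inverse_real_of_nat tendsto_const]]
    by (metis diff_zero scale_zero_left)
  ultimately have "filterlim (\<lambda>k. norm (grad_in H \<Omega> (s k))) at_top sequentially"
    using grad_norm_tendsto_infinity assms(1) \<open>p \<notin> RI\<close> by blast
  then obtain k where "2 / r * (\<omega> y + 1 - \<omega> p - \<theta> \<bullet> (y - p)) < norm (grad_in H \<Omega> (s k))"
    unfolding filterlim_at_top_dense eventually_sequentially by blast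
  moreover have "0 < inverse (real (Suc k))" "inverse (real (Suc k)) \<le> 1"
    by (simp_all add: field_simps)
  from bound[OF this has_grad_RI[OF \<open>s k \<in> RI\<close>, unfolded s_eq]]
  have "r / 2 * norm (grad_in H \<Omega> (s k)) \<le> \<omega> y + 1 - \<omega> p - \<theta> \<bullet> (y - p)"
    unfolding s_eq .
  ultimately show False using \<open>r > 0\<close> by (simp add: field_simps)
qed

lemma argmax_\<phi>_unique:
  assumes "p \<in> C" "\<forall>x\<in>C. \<phi> \<theta> x \<le> \<phi> \<theta> p" "q \<in> C" "\<forall>x\<in>C. \<phi> \<theta> x \<le> \<phi> \<theta> q"
  shows "p = q"
proof (rule ccontr)
  assume "p \<noteq> q"
  define m where "m = (1 / 2 :: real) *\<^sub>R p + (1 - 1 / 2) *\<^sub>R q"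
  have "m \<in> C" unfolding m_def using convexD[OF convex_C assms(1,3)] by simp
  have "\<omega> m < 1 / 2 * \<omega> p + (1 - 1 / 2) * \<omega> q"
    unfolding m_def using argmax_\<phi>_in_RI assms \<open>p \<noteq> q\<close> by (intro strict_convex_RI) auto
  then have "\<phi> \<theta> p < \<phi> \<theta> m"
    using assms(2,4)[rule_format, of p] assms(2)[rule_format, of q] assms(1,3)
    unfolding \<phi>_def m_def by (simp add: algebra_simps)
  then show False using assms(2) \<open>m \<in> C\<close> by fastforce
qed

definition maximizer :: "'a \<Rightarrow> 'a" where
  "maximizer \<theta> = (SOME p. p \<in> C \<and> (\<forall>x\<in>C. \<phi> \<theta> x \<le> \<phi> \<theta> p))"

lemma maximizer:
  shows "maximizer \<theta> \<in> C" and "\<And>x. x \<in> C \<Longrightarrow> \<phi> \<theta> x \<le> \<phi> \<theta> (maximizer \<theta>)"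
proof -
  have "\<exists>p. p \<in> C \<and> (\<forall>x\<in>C. \<phi> \<theta> x \<le> \<phi> \<theta> p)"
    using \<phi>_attains_max[OF compact_C C_nonempty order_refl] by blast
  from someI_ex[OF this]
  show "maximizer \<theta> \<in> C" "\<And>x. x \<in> C \<Longrightarrow> \<phi> \<theta> x \<le> \<phi> \<theta> (maximizer \<theta>)"
    unfolding maximizer_def[symmetric] by auto
qed

lemma maximizer_in_RI: "maximizer \<theta> \<in> RI"
  using argmax_\<phi>_in_RI[OF maximizer(1)] maximizer(2) by blast

lemma maximizer_eqI:
  assumes "p \<in> C" "\<And>x. x \<in> C \<Longrightarrow> \<phi> \<theta> x \<le> \<phi> \<theta> p"
  shows "maximizer \<theta> = p"
  using argmax_\<phi>_unique[OF maximizer(1) _ assms(1)] maximizer(2) assms(2) by blast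

lemma fenchel_conj_eq: "fenchel_conj \<Omega> \<theta> = ereal (\<phi> \<theta> (maximizer \<theta>))"
  unfolding fenchel_conj_def
proof (rule antisym)
  show "(SUP x. ereal (\<theta> \<bullet> x) - \<Omega> x) \<le> ereal (\<phi> \<theta> (maximizer \<theta>))"
  proof (rule SUP_least)
    fix x show "ereal (\<theta> \<bullet> x) - \<Omega> x \<le> ereal (\<phi> \<theta> (maximizer \<theta>))"
      using maximizer(2)[of x \<theta>] by (cases "x \<in> C") (auto simp: \<Omega>_eq \<Omega>_outside \<phi>_def)
  qed
  show "ereal (\<phi> \<theta> (maximizer \<theta>)) \<le> (SUP x. ereal (\<theta> \<bullet> x) - \<Omega> x)"
    by (rule SUP_upper2[of "maximizer \<theta>"]) (simp_all add: \<Omega>_eq[OF maximizer(1)] \<phi>_def)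
qed

lemma \<phi>_diff_le: "\<bar>\<phi> \<theta>' x - \<phi> \<theta> x\<bar> \<le> norm (\<theta>' - \<theta>) * norm x"
  unfolding \<phi>_def using Cauchy_Schwarz_ineq2[of "\<theta>' - \<theta>" x] by (simp add: inner_diff_left)

lemma \<phi>_maximizer_perturb:
  assumes "\<forall>x\<in>C. norm x \<le> R"
  shows "\<phi> \<theta> (maximizer \<theta>) - 2 * (norm (\<theta>' - \<theta>) * R) \<le> \<phi> \<theta> (maximizer \<theta>')"
proof -
  have close: "\<bar>\<phi> \<theta>' x - \<phi> \<theta> x\<bar> \<le> norm (\<theta>' - \<theta>) * R" if "x \<in> C" for x
    using \<phi>_diff_le[of \<theta>' x \<theta>] assms that by (meson mult_left_mono norm_ge_zero order.trans)
  have "\<phi> \<theta>' (maximizer \<theta>) \<le> \<phi> \<theta>' (maximizer \<theta>')"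
    using maximizer by blast
  with close[OF maximizer(1)[of \<theta>]] close[OF maximizer(1)[of \<theta>']] show ?thesis
    by linarith
qed

lemma isCont_maximizer: "isCont maximizer \<theta>"
  unfolding continuous_at_eps_delta
proof (intro allI impI)
  fix \<epsilon> :: real assume "\<epsilon> > 0"
  let ?p = "maximizer \<theta>"
  define K where "K = C - ball ?p \<epsilon>"
  show "\<exists>\<delta>>0. \<forall>\<theta>'. dist \<theta>' \<theta> < \<delta> \<longrightarrow> dist (maximizer \<theta>') ?p < \<epsilon>"
  proof (cases "K = {}")
    case True
    then show ?thesis
      using maximizer(1) unfolding K_def by (intro exI[of _ 1]) (auto simp: dist_commute subset_iff)
  next
    case False
    have "compact K" unfolding K_def by (intro compact_diff compact_C open_ball)
    then obtain q where "q \<in> K" and q: "\<forall>x\<in>K. \<phi> \<theta> x \<le> \<phi> \<theta> q"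
      using \<phi>_attains_max[OF _ False] unfolding K_def by blast
    then have "q \<in> C" "q \<noteq> ?p" using \<open>\<epsilon> > 0\<close> unfolding K_def by auto
    then have "\<phi> \<theta> q < \<phi> \<theta> ?p"
      using maximizer maximizer_eqI[of q \<theta>] by (metis order_le_less)
    obtain R where "R > 0" and R: "\<forall>x\<in>C. norm x \<le> R"
      using compact_imp_bounded[OF compact_C] unfolding bounded_pos by blast
    define \<delta> where "\<delta> = (\<phi> \<theta> ?p - \<phi> \<theta> q) / (2 * R)"
    have "dist (maximizer \<theta>') ?p < \<epsilon>" if "dist \<theta>' \<theta> < \<delta>" for \<theta>'
    proof -
      have "2 * (norm (\<theta>' - \<theta>) * R) < \<phi> \<theta> ?p - \<phi> \<theta> q"
        using that \<open>R > 0\<close> unfolding \<delta>_def by (simp add: dist_norm field_simps)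
      then have "maximizer \<theta>' \<notin> K"
        using \<phi>_maximizer_perturb[OF R, of \<theta> \<theta>'] q by fastforce
      then show ?thesis using maximizer(1) unfolding K_def by (simp add: dist_commute)
    qed
    moreover have "\<delta> > 0" using \<open>\<phi> \<theta> q < \<phi> \<theta> ?p\<close> \<open>R > 0\<close> unfolding \<delta>_def by simp
    ultimately show ?thesis by blast
  qed
qed

lemma has_grad_fenchel_conj: "has_grad_in UNIV (fenchel_conj \<Omega>) (maximizer \<theta>) \<theta>"
proof -
  let ?m = "\<lambda>\<theta>. \<phi> \<theta> (maximizer \<theta>)"
  have "(?m has_derivative (\<lambda>h. maximizer \<theta> \<bullet> h)) (at \<theta>)"
  proof (rule has_derivative_inner_squeeze)
    fix y
    show "0 \<le> ?m y - ?m \<theta> - maximizer \<theta> \<bullet> (y - \<theta>)"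
      using maximizer(2)[OF maximizer(1), of y \<theta>] unfolding \<phi>_def by (simp add: inner_commute inner_diff_left)
    have "?m y - ?m \<theta> - maximizer \<theta> \<bullet> (y - \<theta>) \<le> (y - \<theta>) \<bullet> (maximizer y - maximizer \<theta>)"
      using maximizer(2)[OF maximizer(1), of \<theta> y] unfolding \<phi>_def
      by (simp add: inner_commute inner_diff_left inner_diff_right)
    also have "\<dots> \<le> norm (y - \<theta>) * norm (maximizer y - maximizer \<theta>)" by (rule norm_cauchy_schwarz)
    finally show "?m y - ?m \<theta> - maximizer \<theta> \<bullet> (y - \<theta>) \<le> norm (y - \<theta>) * norm (maximizer y - maximizer \<theta>)" .
  next
    show "((\<lambda>y. norm (maximizer y - maximizer \<theta>)) \<longlongrightarrow> 0) (at \<theta>)"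
      using isCont_maximizer[of \<theta>] by (simp add: isCont_def tendsto_norm_zero LIM_zero)
  qed
  then show ?thesis
    unfolding has_grad_in_def fenchel_conj_eq by simp
qed

lemma maximizer_first_order:
  assumes "v \<in> V"
  shows "(grad_in H \<Omega> (maximizer \<theta>) - \<theta>) \<bullet> v = 0"
proof -
  let ?p = "maximizer \<theta>"
  let ?f = "\<lambda>t. \<theta> \<bullet> ?p + t * (\<theta> \<bullet> v) - \<omega> (?p + t *\<^sub>R v)"
  obtain e where "e > 0" and e: "ball ?p e \<inter> H \<subseteq> C"
    using maximizer_in_RI unfolding rel_interior_ball by blast
  have "0 < norm v + 1" using norm_ge_zero[of v] by linarith
  define d where "d = e / (norm v + 1)"
  have "d > 0" unfolding d_def using \<open>e > 0\<close> \<open>0 < norm v + 1\<close> by simp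
  note line = has_grad_in_line_derivative[OF affine_affine_hull
      has_grad_RI[OF maximizer_in_RI] C_subset_H[OF maximizer(1)] assms, folded \<omega>_def]
  have "(?f has_real_derivative \<theta> \<bullet> v - grad_in H \<Omega> ?p \<bullet> v) (at 0)"
    using line by (auto intro!: derivative_eq_intros)
  moreover have "\<forall>t. \<bar>0 - t\<bar> < d \<longrightarrow> ?f t \<le> ?f 0"
  proof (intro allI impI)
    fix t :: real assume "\<bar>0 - t\<bar> < d"
    have "norm (t *\<^sub>R v) \<le> \<bar>t\<bar> * (norm v + 1)" by (simp add: mult_left_mono)
    also have "\<dots> < e"
      using \<open>\<bar>0 - t\<bar> < d\<close> \<open>0 < norm v + 1\<close> unfolding d_def by (simp add: pos_less_divide_eq)
    finally have "?p + t *\<^sub>R v \<in> C"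
      using e affine_add_dir[OF affine_affine_hull C_subset_H[OF maximizer(1)] assms]
      by (auto simp: dist_norm)
    from maximizer(2)[OF this, of \<theta>] show "?f t \<le> ?f 0"
      unfolding \<phi>_def by (simp add: inner_add_right)
  qed
  ultimately have "\<theta> \<bullet> v - grad_in H \<Omega> ?p \<bullet> v = 0"
    by (rule DERIV_local_max[OF _ \<open>d > 0\<close>])
  then show ?thesis by (simp add: inner_diff_left)
qed

section \<open>The extension \<Psi>\<close>

abbreviation proj :: "'a \<Rightarrow> 'a" where "proj \<equiv> closest_point H"

lemma H_nonempty: "H \<noteq> {}"
  using C_nonempty by simp

lemma proj_in_H: "proj x \<in> H"
  using closest_point_in_set[OF closed_affine_hull H_nonempty] .

lemma continuous_proj: "continuous (at x) proj"
  using continuous_at_closest_point[OF affine_imp_convex[OF affine_affine_hull] closed_affine_hull H_nonempty] .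

definition \<Psi> :: "'a \<Rightarrow> ereal" where
  "\<Psi> x = \<Omega> (proj x) + ereal ((norm (x - proj x))\<^sup>2 / 2)"

definition \<psi> :: "'a \<Rightarrow> real" where
  "\<psi> x = \<omega> (proj x) + (norm (x - proj x))\<^sup>2 / 2"

definition U :: "'a set" where "U = proj -` RI"

lemma \<Psi>_finite: "proj x \<in> C \<Longrightarrow> \<Psi> x = ereal (\<psi> x)"
  unfolding \<Psi>_def \<psi>_def by (simp add: \<Omega>_eq)

lemma \<Psi>_infinite: "proj x \<notin> C \<Longrightarrow> \<Psi> x = \<infinity>"
  unfolding \<Psi>_def by (simp add: \<Omega>_outside)

lemma \<Psi>_neq_minf: "\<Psi> x \<noteq> -\<infinity>"
  by (cases "proj x \<in> C") (simp_all add: \<Psi>_finite \<Psi>_infinite)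

lemma \<Omega>_eq_\<Psi>_plus_indicator: "\<Omega> x = \<Psi> x + eindicator C x"
proof (cases "x \<in> C")
  case True
  then have "proj x = x" using closest_point_self C_subset_H by blast
  then show ?thesis using True unfolding \<Psi>_def eindicator_def by simp
qed (simp add: eindicator_def \<Omega>_outside \<Psi>_neq_minf)

lemma edom_\<Psi>: "edom \<Psi> = proj -` C"
proof -
  have "\<Psi> x < \<infinity> \<longleftrightarrow> proj x \<in> C" for x
    by (cases "proj x \<in> C") (simp_all add: \<Psi>_finite \<Psi>_infinite)
  then show ?thesis unfolding edom_def by blast
qed

lemma closed_edom_\<Psi>: "closed (edom \<Psi>)"
  unfolding edom_\<Psi>
  by (intro continuous_closed_vimage compact_imp_closed[OF compact_C] continuous_proj)

lemma open_U: "open U"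
proof -
  obtain T where "open T" "RI = H \<inter> T"
    using openin_rel_interior[of C] unfolding openin_open by blast
  then have "U = proj -` T" unfolding U_def using proj_in_H by auto
  then show ?thesis using continuous_open_vimage[OF \<open>open T\<close> continuous_proj] by simp
qed

lemma RI_subset_U: "RI \<subseteq> U"
  unfolding U_def using closest_point_self C_subset_H RI_subset_C by fastforce

lemma U_subset_edom_\<Psi>: "U \<subseteq> edom \<Psi>"
  unfolding U_def edom_\<Psi> using RI_subset_C by auto

lemma interior_edom_\<Psi>: "interior (edom \<Psi>) = U"
proof
  show "U \<subseteq> interior (edom \<Psi>)"
    by (rule interior_maximal[OF U_subset_edom_\<Psi> open_U])
  show "interior (edom \<Psi>) \<subseteq> U"
  proof
    fix x assume "x \<in> interior (edom \<Psi>)"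
    then obtain e where "e > 0" and e: "ball x e \<subseteq> proj -` C"
      unfolding edom_\<Psi> mem_interior by blast
    have "w \<in> C" if "w \<in> ball (proj x) e \<inter> H" for w
    proof -
      have "w - proj x \<in> V" using diff_in_dir that proj_in_H by blast
      moreover have "x + (w - proj x) \<in> ball x e" using that by (simp add: dist_norm norm_minus_commute)
      ultimately show "w \<in> C"
        using e closest_point_affine_add[OF affine_affine_hull] by fastforce
    qed
    moreover have "proj x \<in> C" using e centre_in_ball[of x e] \<open>e > 0\<close> by blast
    ultimately show "x \<in> U"
      unfolding U_def rel_interior_ball using \<open>e > 0\<close> by blast
  qed
qed

lemma has_grad_\<Psi>:
  assumes "x \<in> U"
  shows "has_grad_in UNIV \<Psi> (grad_in H \<Omega> (proj x) + (x - proj x)) x"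
proof -
  let ?P = "closest_point V" and ?g = "grad_in H \<Omega> (proj x)"
  have "proj x \<in> RI" using assms unfolding U_def by simp
  then have "?g \<in> V" "((\<lambda>y. \<omega> y) has_derivative (\<bullet>) ?g) (at (proj x) within H)"
    using has_grad_RI unfolding has_grad_in_def \<omega>_def by blast+
  then have "((\<lambda>y. \<omega> y) has_derivative (\<bullet>) ?g) (at (proj x) within range proj)"
    using proj_in_H by (blast intro: has_derivative_subset)
  from diff_chain_within[OF has_derivative_closest_point_affine[OF affine_affine_hull H_nonempty] this]
  have "((\<lambda>y. \<omega> (proj y)) has_derivative (\<lambda>h. ?g \<bullet> ?P h)) (at x)"
    by (simp add: o_def)
  moreover have "?g \<bullet> ?P h = ?g \<bullet> h" for h
    using closest_point_subspace_orthogonal[OF subspace_V \<open>?g \<in> V\<close>, of h] by (simp add: inner_diff_left inner_commute)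
  moreover have "(x - proj x) \<bullet> ?P h = 0" for h
    using closest_point_affine_orthogonal[OF affine_affine_hull]
      closest_point_in_set[OF closed_subspace[OF subspace_V]] subspace_V subspace_0
    by blast
  moreover have "((\<lambda>y. (norm (y - proj y))\<^sup>2 / 2) has_derivative (\<lambda>h. (x - proj x) \<bullet> (h - ?P h))) (at x)"
    unfolding power2_norm_eq_inner
    by (auto intro!: derivative_eq_intros has_derivative_closest_point_affine[OF affine_affine_hull H_nonempty]
        simp: inner_commute)
  ultimately have "(\<psi> has_derivative (\<lambda>h. (?g + (x - proj x)) \<bullet> h)) (at x)"
    unfolding \<psi>_def[abs_def] by (auto intro: has_derivative_eq_rhs[OF has_derivative_add] simp: inner_add_left inner_diff_right)
  then have "((\<lambda>y. real_of_ereal (\<Psi> y)) has_derivative (\<lambda>h. (?g + (x - proj x)) \<bullet> h)) (at x)"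
    by (rule has_derivative_transform_within_open[OF _ open_U assms])
       (use U_subset_edom_\<Psi> in \<open>auto simp: \<Psi>_finite edom_\<Psi>\<close>)
  then show ?thesis
    using assms U_subset_edom_\<Psi> unfolding has_grad_in_def edom_\<Psi> by (auto simp: \<Psi>_finite)
qed

lemma grad_\<Psi>: "x \<in> U \<Longrightarrow> grad_in UNIV \<Psi> x = grad_in H \<Omega> (proj x) + (x - proj x)"
  using grad_in_eqI[OF affine_UNIV UNIV_I has_grad_\<Psi>] .

lemma norm_grad_\<Psi>_ge:
  assumes "x \<in> U"
  shows "norm (grad_in H \<Omega> (proj x)) \<le> norm (grad_in UNIV \<Psi> x)"
proof -
  have "orthogonal (grad_in H \<Omega> (proj x)) (x - proj x)"
    using closest_point_affine_orthogonal[OF affine_affine_hull grad_RI_in_V, of "proj x" x] assms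
    unfolding U_def orthogonal_def by (simp add: inner_commute)
  from norm_add_Pythagorean[OF this] show ?thesis
    unfolding grad_\<Psi>[OF assms] by (simp add: power2_le_imp_le)
qed

lemma strict_convex_\<psi>:
  assumes "x \<in> U" "y \<in> U" "x \<noteq> y" "0 < u" "u < 1"
  shows "\<psi> (u *\<^sub>R x + (1 - u) *\<^sub>R y) < u * \<psi> x + (1 - u) * \<psi> y"
proof -
  let ?z = "u *\<^sub>R x + (1 - u) *\<^sub>R y"
  define A where "A = u * \<omega> (proj x) + (1 - u) * \<omega> (proj y)"
  define B where "B = u * (norm (x - proj x))\<^sup>2 + (1 - u) * (norm (y - proj y))\<^sup>2"
  have proj_z: "proj ?z = u *\<^sub>R proj x + (1 - u) *\<^sub>R proj y"
    using closest_point_affine_combination[OF affine_affine_hull H_nonempty] .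
  then have perp_z: "?z - proj ?z = u *\<^sub>R (x - proj x) + (1 - u) *\<^sub>R (y - proj y)"
    by (simp add: algebra_simps)
  have "proj x \<in> RI" "proj y \<in> RI" using assms(1,2) unfolding U_def by auto
  then have \<omega>_le: "\<omega> (proj ?z) \<le> A" and \<omega>_less: "proj x \<noteq> proj y \<Longrightarrow> \<omega> (proj ?z) < A"
    using convex_onD[OF convex_on_\<omega>, of "1 - u" "proj x" "proj y"] strict_convex_RI assms(4,5)
    unfolding proj_z A_def by (auto simp: RI_subset_C)
  have "0 < u * (1 - u)" using assms(4,5) by simp
  then have sq_le: "(norm (?z - proj ?z))\<^sup>2 \<le> B"
    and sq_less: "x - proj x \<noteq> y - proj y \<Longrightarrow> (norm (?z - proj ?z))\<^sup>2 < B"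
    unfolding perp_z norm_convex_combination_square B_def by simp_all
  have "u * \<psi> x + (1 - u) * \<psi> y = A + B / 2"
    unfolding \<psi>_def A_def B_def by (simp add: field_simps)
  moreover have "\<psi> ?z = \<omega> (proj ?z) + (norm (?z - proj ?z))\<^sup>2 / 2"
    unfolding \<psi>_def ..
  moreover consider "proj x \<noteq> proj y" | "x - proj x \<noteq> y - proj y"
    using assms(3) by (cases "proj x = proj y") auto
  ultimately show ?thesis
    using \<omega>_le \<omega>_less sq_le sq_less by cases fastforce+
qed

lemma legendre_\<Psi>: "legendre \<Psi>"
  unfolding legendre_in_def Let_def Int_UNIV_right int_in_UNIV interior_edom_\<Psi>
    closure_closed[OF closed_edom_\<Psi>]
proof (intro conjI ballI allI impI)
  show "U \<noteq> {}" using RI_subset_U RI_nonempty by blast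
  fix x assume "x \<in> U"
  then show "\<exists>g. has_grad_in UNIV \<Psi> g x" using has_grad_\<Psi> by blast
  fix y and u :: real assume "y \<in> U" "x \<noteq> y" "0 < u \<and> u < 1"
  moreover have "u *\<^sub>R x + (1 - u) *\<^sub>R y \<in> U"
    using convexD[OF convex_rel_interior[OF convex_C]] \<open>x \<in> U\<close> \<open>y \<in> U\<close> \<open>0 < u \<and> u < 1\<close>
      closest_point_affine_combination[OF affine_affine_hull H_nonempty]
    unfolding U_def by simp
  ultimately have "\<psi> (u *\<^sub>R x + (1 - u) *\<^sub>R y) < u * \<psi> x + (1 - u) * \<psi> y"
    and "proj x \<in> C" "proj y \<in> C" "proj (u *\<^sub>R x + (1 - u) *\<^sub>R y) \<in> C"
    using strict_convex_\<psi> \<open>x \<in> U\<close> U_subset_edom_\<Psi> unfolding edom_\<Psi> by auto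
  then show "\<Psi> (u *\<^sub>R x + (1 - u) *\<^sub>R y) < ereal u * \<Psi> x + ereal (1 - u) * \<Psi> y"
    by (simp add: \<Psi>_finite)
next
  fix s and x :: 'a
  assume s: "\<forall>k. s k \<in> U" "s \<longlonglongrightarrow> x" and "x \<in> edom \<Psi> - U"
  have "filterlim (\<lambda>k. norm (grad_in H \<Omega> (proj (s k)))) at_top sequentially"
    using s \<open>x \<in> edom \<Psi> - U\<close> isCont_tendsto_compose[OF continuous_proj s(2)]
    by (intro grad_norm_tendsto_infinity) (auto simp: U_def edom_\<Psi>)
  moreover have "\<forall>k. norm (grad_in H \<Omega> (proj (s k))) \<le> norm (grad_in UNIV \<Psi> (s k))"
    using norm_grad_\<Psi>_ge s(1) by blast
  ultimately show "filterlim (\<lambda>k. norm (grad_in UNIV \<Psi> (s k))) at_top sequentially"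
    by (rule filterlim_at_top_mono[OF _ always_eventually])
qed

lemma edom_fenchel_conj_\<Psi>: "edom (fenchel_conj \<Psi>) = UNIV"
proof -
  have bound: "fenchel_conj \<Psi> \<theta> \<le> ereal (\<phi> \<theta> (maximizer \<theta>) + (norm \<theta>)\<^sup>2 / 2)" for \<theta>
    unfolding fenchel_conj_def
  proof (rule SUP_least)
    fix x
    show "ereal (\<theta> \<bullet> x) - \<Psi> x \<le> ereal (\<phi> \<theta> (maximizer \<theta>) + (norm \<theta>)\<^sup>2 / 2)"
    proof (cases "proj x \<in> C")
      case True
      let ?w = "x - proj x"
      have "(norm (\<theta> - ?w))\<^sup>2 = (norm \<theta>)\<^sup>2 - 2 * (\<theta> \<bullet> ?w) + (norm ?w)\<^sup>2"
        unfolding power2_norm_eq_inner by (simp add: inner_diff_left inner_diff_right inner_commute)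
      then have "\<theta> \<bullet> ?w - (norm ?w)\<^sup>2 / 2 \<le> (norm \<theta>)\<^sup>2 / 2"
        using zero_le_power2[of "norm (\<theta> - ?w)"] by linarith
      moreover have "\<phi> \<theta> (proj x) \<le> \<phi> \<theta> (maximizer \<theta>)" using maximizer(2)[OF True] .
      ultimately have "\<theta> \<bullet> x - \<psi> x \<le> \<phi> \<theta> (maximizer \<theta>) + (norm \<theta>)\<^sup>2 / 2"
        unfolding \<psi>_def \<phi>_def inner_diff_right by linarith
      then show ?thesis by (simp add: \<Psi>_finite[OF True])
    qed (simp add: \<Psi>_infinite)
  qed
  have "fenchel_conj \<Psi> \<theta> < \<infinity>" for \<theta>
    using le_less_trans[OF bound[of \<theta>], of \<infinity>] by simp
  then show ?thesis unfolding edom_def by blast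
qed

lemma has_grad_\<Psi>_maximizer: "has_grad_in UNIV \<Psi> (grad_in H \<Omega> (maximizer \<theta>)) (maximizer \<theta>)"
proof -
  have "proj (maximizer \<theta>) = maximizer \<theta>"
    using closest_point_self C_subset_H maximizer(1) by blast
  then show ?thesis
    using has_grad_\<Psi>[of "maximizer \<theta>"] maximizer_in_RI RI_subset_U by auto
qed

lemma C_subset_closure_U: "C \<subseteq> closure U"
  using convex_closure_rel_interior[OF convex_C] closure_subset[of C] closure_mono[OF RI_subset_U]
  by blast

end

theorem proposition5:
  fixes C :: "'a::euclidean_space set" and \<Omega> :: "'a \<Rightarrow> ereal"
  assumes "convex C" and "compact C"
    and "proper_fun \<Omega>" and "elsc \<Omega>" and "econvex \<Omega>"
    and "edom \<Omega> = C"
    and "legendre_in (affine hull C) \<Omega>"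
  shows "\<exists>\<Psi> :: 'a \<Rightarrow> ereal.
           (\<forall>x. \<Psi> x \<noteq> -\<infinity>) \<and> legendre \<Psi> \<and>
           C \<subseteq> closure (interior (edom \<Psi>)) \<and>
           interior (edom \<Psi>) \<inter> C \<noteq> {} \<and>
           (\<forall>x. \<Omega> x = \<Psi> x + eindicator C x) \<and>
           edom (fenchel_conj \<Psi>) = UNIV \<and>
           (\<forall>\<theta>. \<exists>z. (\<forall>v \<in> dir (affine hull C). z \<bullet> v = 0) \<and>
                (\<exists>p. has_grad_in UNIV (fenchel_conj \<Omega>) p \<theta> \<and>
                     has_grad_in UNIV \<Psi> (\<theta> + z) p))"
proof -
  interpret legendre_on_compact C \<Omega> using assms by unfold_locales
  show ?thesis
  proof (intro exI[of _ \<Psi>] conjI allI)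
    show "legendre \<Psi>" by (rule legendre_\<Psi>)
    show "C \<subseteq> closure (interior (edom \<Psi>))" "interior (edom \<Psi>) \<inter> C \<noteq> {}"
      unfolding interior_edom_\<Psi> using C_subset_closure_U RI_subset_U RI_nonempty RI_subset_C by auto
    show "edom (fenchel_conj \<Psi>) = UNIV" by (rule edom_fenchel_conj_\<Psi>)
    fix x show "\<Psi> x \<noteq> -\<infinity>" "\<Omega> x = \<Psi> x + eindicator C x"
      by (rule \<Psi>_neq_minf, rule \<Omega>_eq_\<Psi>_plus_indicator)
  next
    fix \<theta>
    let ?p = "maximizer \<theta>"
    have "\<forall>v\<in>dir (affine hull C). (grad_in H \<Omega> ?p - \<theta>) \<bullet> v = 0"
      using maximizer_first_order by blast
    moreover have "has_grad_in UNIV \<Psi> (\<theta> + (grad_in H \<Omega> ?p - \<theta>)) ?p"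
      using has_grad_\<Psi>_maximizer by simp
    ultimately show "\<exists>z. (\<forall>v\<in>dir (affine hull C). z \<bullet> v = 0) \<and>
        (\<exists>p. has_grad_in UNIV (fenchel_conj \<Omega>) p \<theta> \<and> has_grad_in UNIV \<Psi> (\<theta> + z) p)"
      using has_grad_fenchel_conj by blast
  qed
qed

end
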